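(* Let $G$ be a finite simple graph with $n$ vertices $v_1,\dots,v_n$ and let $\bar{\bar{d}}=\sqrt{\frac{d(v_1)^2+\cdots+d(v_n)^2}{n}}$. Let $u_1,u_2,\dots,u_r$, $r\geq 2$, be a $\beta$-sequence in $G$ such that $$d(u_1)+d(u_2)+\cdots+d(u_r)\leq (r-1)n.$$ Then $$r\geq \frac{n}{n-\bar{\bar{d}}}.$$
   Context: All graphs are finite, undirected, without loops or multiple edges; $d(v)$ is the degree of $v$ in $G$, $N(v)$ is the set of neighbours of $v$, and $N(u_1,\dots,u_k)=\bigcap_{i=1}^k N(u_i)$. A sequence $u_1,\dots,u_r$ of vertices of $G$ is a $\beta$-sequence if (i) $d(u_1)=\max\{d(v): v\in V(G)\}$ and (ii) for $2\le i\le r$, $u_i\in N(u_1,\dots,u_{i-1})$ and $d(u_i)=\max\{d(v): v\in N(u_1,\dots,u_{i-1})\}$. *)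

theory Defs
  imports Complex_Main
begin

definition simple_graph :: "'a set \<Rightarrow> ('a \<Rightarrow> 'a \<Rightarrow> bool) \<Rightarrow> bool" where
  "simple_graph V E \<longleftrightarrow> finite V \<and> (\<forall>x y. E x y \<longrightarrow> x \<in> V \<and> y \<in> V)
     \<and> (\<forall>x y. E x y \<longrightarrow> E y x) \<and> (\<forall>x. \<not> E x x)"

definition deg :: "'a set \<Rightarrow> ('a \<Rightarrow> 'a \<Rightarrow> bool) \<Rightarrow> 'a \<Rightarrow> nat" where
  "deg V E v = card {w \<in> V. E v w}"

definition common_nbrs :: "'a set \<Rightarrow> ('a \<Rightarrow> 'a \<Rightarrow> bool) \<Rightarrow> 'a set \<Rightarrow> 'a set" where
  "common_nbrs V E S = {w \<in> V. \<forall>u \<in> S. E u w}"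

text \<open>A beta-sequence u_1,...,u_r, represented as the list us = [u_1,...,u_r]
(0-based indexing: us!0 = u_1).\<close>
definition beta_seq :: "'a set \<Rightarrow> ('a \<Rightarrow> 'a \<Rightarrow> bool) \<Rightarrow> 'a list \<Rightarrow> bool" where
  "beta_seq V E us \<longleftrightarrow> us \<noteq> [] \<and> us ! 0 \<in> V
     \<and> deg V E (us ! 0) = Max (deg V E ` V)
     \<and> (\<forall>i. 1 \<le> i \<and> i < length us \<longrightarrow>
          us ! i \<in> common_nbrs V E (set (take i us))
        \<and> deg V E (us ! i) = Max (deg V E ` common_nbrs V E (set (take i us))))"

end

theory Submission imports Defs begin

text \<open>Write A_i = N(u_1, ..., u_i), so that V = A_0 \<supseteq> A_1 \<supseteq> ... \<supseteq> A_(r-1), and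
  d_i = d(u_(i+1)). Every vertex of A_i has degree at most d_i, and the layer A_i - A_(i+1)
  avoids the neighbourhood of u_(i+1), so it has at most n - d_i vertices. Splitting V into
  these layers bounds the sum of squared degrees by a weighted sum of the d_i^2 whose weights
  sum to n. Given the hypothesis on the sum of the d_i, this weighted sum is at most
  n^3 ((r-1)/r)^2: after normalising by n and moving surplus weight of the last layer onto the
  earlier ones, each term is at most x(1-x)^2, which lies below its tangent line at x = 1/r.
  So the quadratic mean degree is at most n(r-1)/r, which rearranges to the claim.\<close>

lemma cubic_le_tangent:
  fixes x r :: real
  assumes "0 \<le> x" "x \<le> 1" "r \<ge> 2"
  shows "x * (1 - x)^2 \<le> (1/r) * (1 - 1/r)^2 + (1 - 1/r) * (1 - 3/r) * (x - 1/r)"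
proof -
  define a where "a = 1/r"
  have a: "0 < a" "a \<le> 1/2" using assms(3) by (auto simp: a_def field_simps)
  have "a * (1 - a)^2 + (1 - a) * (1 - 3*a) * (x - a) - x * (1 - x)^2
      = - ((x - a)^2 * (x - 2 * (1 - a)))"
    by (simp add: power2_eq_square algebra_simps)
  moreover have "(x - a)^2 * (x - 2 * (1 - a)) \<le> 0"
    using a assms by (intro mult_nonneg_nonpos) auto
  ultimately show ?thesis by (simp add: a_def)
qed

lemma weighted_squares_le_bounded:
  fixes x s :: "nat \<Rightarrow> real" and xl sl :: real and R :: nat
  assumes "R \<ge> 1"
    and xs: "\<forall>i<R. 0 \<le> x i \<and> 0 \<le> s i \<and> x i \<le> 1 - s i"
    and l: "0 \<le> xl" "0 \<le> sl" "xl \<le> 1 - sl"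
    and sum_x: "(\<Sum>i<R. x i) + xl = 1"
  shows "(\<Sum>i<R. x i * (s i)^2) + xl * sl^2 \<le> (real R / (real R + 1))^2"
proof -
  define r where "r = real R + 1"
  have r: "r \<ge> 2" using assms(1) by (simp add: r_def)
  define K where "K = (1/r) * (1 - 1/r)^2"
  define M where "M = (1 - 1/r) * (1 - 3/r)"
  have term_le: "y * t^2 \<le> K + M * (y - 1/r)" if "0 \<le> y" "0 \<le> t" "y \<le> 1 - t" for y t
  proof -
    have "y * t^2 \<le> y * (1 - y)^2"
      using that by (intro mult_left_mono power_mono) auto
    also have "\<dots> \<le> K + M * (y - 1/r)"
      using cubic_le_tangent[OF _ _ r, of y] that by (simp add: K_def M_def)
    finally show ?thesis .
  qed
  have sum_lin: "(\<Sum>i<R. K + M * (x i - 1/r)) = real R * (K - M/r) + M * (\<Sum>i<R. x i)"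
    by (simp add: sum.distrib sum_subtractf sum_distrib_left algebra_simps)
  have "(\<Sum>i<R. x i * (s i)^2) + xl * sl^2 \<le> (\<Sum>i<R. K + M * (x i - 1/r)) + (K + M * (xl - 1/r))"
    using xs l by (intro add_mono sum_mono term_le) auto
  also have "\<dots> = r * (K - M/r) + M * ((\<Sum>i<R. x i) + xl)"
    unfolding sum_lin by (simp add: r_def algebra_simps add_divide_distrib)
  also have "\<dots> = r * K"
    using r by (simp add: sum_x right_diff_distrib)
  also have "\<dots> = (1 - 1/r)^2"
    using r by (simp add: K_def)
  also have "1 - 1/r = real R / (real R + 1)"
    by (simp add: r_def field_simps)
  finally show ?thesis .
qed

text \<open>If \<open>xl\<close> exceeds \<open>1 - sl\<close>, the surplus is moved onto the \<open>x i\<close>, up to their caps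
  \<open>1 - s i\<close>; this only increases the sum because \<open>sl \<le> s i\<close>.\<close>

lemma weighted_squares_le:
  fixes x s :: "nat \<Rightarrow> real" and xl sl :: real and R :: nat
  assumes R: "R \<ge> 1"
    and xs: "\<forall>i<R. 0 \<le> x i \<and> 0 \<le> s i \<and> x i \<le> 1 - s i \<and> sl \<le> s i"
    and l: "0 \<le> xl" "0 \<le> sl" "sl \<le> 1"
    and sum_x: "(\<Sum>i<R. x i) + xl = 1"
    and sum_s: "(\<Sum>i<R. s i) + sl \<le> real R"
  shows "(\<Sum>i<R. x i * (s i)^2) + xl * sl^2 \<le> (real R / (real R + 1))^2"
proof (cases "xl \<le> 1 - sl")
  case True
  then show ?thesis using weighted_squares_le_bounded[OF R _ l(1,2) True sum_x] xs by auto
next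
  case False
  define e where "e = xl - (1 - sl)"
  define slack where "slack i = 1 - s i - x i" for i
  define S where "S = (\<Sum>i<R. slack i)"
  have slack: "\<forall>i<R. 0 \<le> slack i" using xs by (auto simp: slack_def)
  have "S = real R - (\<Sum>i<R. s i) - (\<Sum>i<R. x i)"
    by (simp add: S_def slack_def sum_subtractf)
  hence e_le_S: "e \<le> S" using sum_x sum_s by (simp add: e_def)
  have e: "0 < e" using False by (simp add: e_def)
  define t where "t = e / S"
  have t: "0 < t" "t \<le> 1" "t * S = e" using e e_le_S by (auto simp: t_def field_simps)
  define x' where "x' i = x i + t * slack i" for i
  have "(\<Sum>i<R. x' i * (s i)^2) + (1 - sl) * sl^2 \<le> (real R / (real R + 1))^2"
  proof (rule weighted_squares_le_bounded[OF R])
    show "\<forall>i<R. 0 \<le> x' i \<and> 0 \<le> s i \<and> x' i \<le> 1 - s i"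
    proof (intro allI impI conjI)
      fix i assume i: "i < R"
      have "0 \<le> t * slack i" "t * slack i \<le> slack i"
        using t slack i by (auto intro: mult_left_le_one_le)
      then show "0 \<le> x' i" "0 \<le> s i" "x' i \<le> 1 - s i"
        using xs i by (auto simp: x'_def slack_def)
    qed
    show "(\<Sum>i<R. x' i) + (1 - sl) = 1"
      using sum_x t(3) by (simp add: x'_def sum.distrib sum_distrib_left[symmetric] S_def e_def)
  qed (use l in auto)
  moreover have "e * sl^2 \<le> (\<Sum>i<R. t * slack i * (s i)^2)"
  proof -
    have "e * sl^2 = (\<Sum>i<R. t * slack i * sl^2)"
      using t(3) by (simp add: sum_distrib_right[symmetric] sum_distrib_left[symmetric] S_def)
    also have "\<dots> \<le> (\<Sum>i<R. t * slack i * (s i)^2)"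
      using t slack xs l(2) by (intro sum_mono mult_left_mono power_mono) auto
    finally show ?thesis .
  qed
  moreover have "(\<Sum>i<R. x' i * (s i)^2) = (\<Sum>i<R. x i * (s i)^2) + (\<Sum>i<R. t * slack i * (s i)^2)"
    by (simp add: x'_def sum.distrib distrib_right)
  ultimately show ?thesis by (simp add: e_def algebra_simps)
qed

lemma weighted_squares_le_scaled:
  fixes x s :: "nat \<Rightarrow> real" and xl sl n :: real and R :: nat
  assumes n: "0 < n" and R: "R \<ge> 1"
    and xs: "\<forall>i<R. 0 \<le> x i \<and> 0 \<le> s i \<and> x i + s i \<le> n \<and> sl \<le> s i"
    and l: "0 \<le> xl" "0 \<le> sl" "sl \<le> n"
    and sum_x: "(\<Sum>i<R. x i) + xl = n"
    and sum_s: "(\<Sum>i<R. s i) + sl \<le> real R * n"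
  shows "(\<Sum>i<R. x i * (s i)^2) + xl * sl^2 \<le> n^3 * (real R / (real R + 1))^2"
proof -
  have "(\<Sum>i<R. (x i / n) * (s i / n)^2) + (xl / n) * (sl / n)^2 \<le> (real R / (real R + 1))^2"
  proof (rule weighted_squares_le[OF R])
    show "\<forall>i<R. 0 \<le> x i / n \<and> 0 \<le> s i / n \<and> x i / n \<le> 1 - s i / n \<and> sl / n \<le> s i / n"
      using xs n by (auto simp: field_simps divide_right_mono)
    show "(\<Sum>i<R. x i / n) + xl / n = 1" "(\<Sum>i<R. s i / n) + sl / n \<le> real R"
      using sum_x sum_s n by (simp_all add: field_simps flip: sum_divide_distrib)
  qed (use l n in auto)
  moreover have "(\<Sum>i<R. (x i / n) * (s i / n)^2) + (xl / n) * (sl / n)^2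
      = ((\<Sum>i<R. x i * (s i)^2) + xl * sl^2) / n^3"
    using n by (simp add: power2_eq_square power3_eq_cube field_simps flip: sum_divide_distrib)
  ultimately show ?thesis using n by (simp add: divide_le_eq mult.commute)
qed

lemma sum_decreasing_chain:
  fixes A :: "nat \<Rightarrow> 'a set" and f :: "'a \<Rightarrow> real"
  assumes fin: "\<And>i. finite (A i)" and dec: "\<And>i. i < k \<Longrightarrow> A (Suc i) \<subseteq> A i"
  shows "(\<Sum>v\<in>A 0. f v) = (\<Sum>i<k. \<Sum>v\<in>A i - A (Suc i). f v) + (\<Sum>v\<in>A k. f v)"
  using dec
proof (induction k)
  case (Suc k)
  have "(\<Sum>v\<in>A k. f v) = (\<Sum>v\<in>A k - A (Suc k). f v) + (\<Sum>v\<in>A (Suc k). f v)"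
    using Suc.prems fin by (metis lessI sum.subset_diff)
  then show ?case using Suc by simp
qed simp

abbreviation prefix_nbrs :: "'a set \<Rightarrow> ('a \<Rightarrow> 'a \<Rightarrow> bool) \<Rightarrow> 'a list \<Rightarrow> nat \<Rightarrow> 'a set" where
  "prefix_nbrs V E us i \<equiv> common_nbrs V E (set (take i us))"

lemma common_nbrs_subset: "common_nbrs V E S \<subseteq> V"
  by (auto simp: common_nbrs_def)

lemma common_nbrs_empty [simp]: "common_nbrs V E {} = V"
  by (simp add: common_nbrs_def)

lemma prefix_nbrs_antimono: "i \<le> j \<Longrightarrow> prefix_nbrs V E us j \<subseteq> prefix_nbrs V E us i"
  using set_take_subset_set_take[of i j us] by (auto simp: common_nbrs_def)

lemma prefix_nbrs_Suc:
  "i < length us \<Longrightarrow> prefix_nbrs V E us (Suc i) = prefix_nbrs V E us i \<inter> {w. E (us ! i) w}"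
  by (auto simp: common_nbrs_def take_Suc_conv_app_nth)

lemma deg_le_card: "finite V \<Longrightarrow> deg V E v \<le> card V"
  unfolding deg_def by (intro card_mono) auto

lemma card_prefix_nbrs_diff_Suc:
  assumes "finite V" "i < length us"
  shows "card (prefix_nbrs V E us i - prefix_nbrs V E us (Suc i)) + deg V E (us ! i) \<le> card V"
proof -
  let ?N = "{w \<in> V. E (us ! i) w}"
  have "card (prefix_nbrs V E us i - prefix_nbrs V E us (Suc i)) \<le> card (V - ?N)"
    using assms common_nbrs_subset[of V E] by (intro card_mono) (auto simp: prefix_nbrs_Suc)
  also have "\<dots> = card V - deg V E (us ! i)"
    using assms(1) by (simp add: card_Diff_subset deg_def)
  finally show ?thesis using deg_le_card[OF assms(1)] by (metis add.commute le_diff_conv2)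
qed

lemma beta_seq_nth:
  assumes "beta_seq V E us" "i < length us"
  shows "us ! i \<in> prefix_nbrs V E us i"
    and "deg V E (us ! i) = Max (deg V E ` prefix_nbrs V E us i)"
  using assms by (cases "i = 0"; simp add: beta_seq_def)+

lemma deg_le_beta_seq_nth:
  assumes "finite V" "beta_seq V E us" "i < length us" "v \<in> prefix_nbrs V E us i"
  shows "deg V E v \<le> deg V E (us ! i)"
proof -
  have "finite (prefix_nbrs V E us i)"
    using assms(1) common_nbrs_subset by (rule finite_subset[rotated])
  then show ?thesis
    using assms(4) beta_seq_nth(2)[OF assms(2,3)] by simp
qed

lemma beta_seq_deg_antimono:
  assumes "finite V" "beta_seq V E us" "i \<le> j" "j < length us"
  shows "deg V E (us ! j) \<le> deg V E (us ! i)"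
  using assms beta_seq_nth(1)[OF assms(2,4)] prefix_nbrs_antimono[OF assms(3), of V E us]
  by (intro deg_le_beta_seq_nth) auto

lemma beta_seq_sum_deg_squares_le:
  assumes fin: "finite V" and beta: "beta_seq V E us" and len: "length us \<ge> 2"
    and sum_deg: "(\<Sum>u\<leftarrow>us. deg V E u) \<le> (length us - 1) * card V"
  defines "R \<equiv> length us - 1"
  shows "(\<Sum>v\<in>V. (real (deg V E v))^2) \<le> real (card V) ^ 3 * (real R / (real R + 1))^2"
proof -
  define A where "A = prefix_nbrs V E us"
  define d where "d i = real (deg V E (us ! i))" for i
  define x where "x i = real (card (A i - A (Suc i)))" for i
  have R: "R \<ge> 1" "length us = Suc R" using len by (auto simp: R_def)
  have finA: "finite (A i)" for i
    unfolding A_def using fin common_nbrs_subset by (rule finite_subset[rotated])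
  have deg_sq_le: "(real (deg V E v))^2 \<le> (d i)^2" if "i \<le> R" "v \<in> A i" for i v
    using deg_le_beta_seq_nth[OF fin beta, of i v] that R by (simp add: A_def d_def)
  have chain: "(\<Sum>v\<in>V. f v) = (\<Sum>i<R. \<Sum>v\<in>A i - A (Suc i). f v) + (\<Sum>v\<in>A R. f v)"
    for f :: "'a \<Rightarrow> real"
    using sum_decreasing_chain[of A R f, OF finA] prefix_nbrs_antimono[of _ "Suc _" V E us]
    by (simp add: A_def)
  have layer_le: "(\<Sum>v\<in>A i - A (Suc i). (real (deg V E v))^2) \<le> x i * (d i)^2" if "i < R" for i
    using sum_mono[of "A i - A (Suc i)" _ "\<lambda>_. (d i)^2"] deg_sq_le[of i] that
    by (simp add: x_def)
  have last_le: "(\<Sum>v\<in>A R. (real (deg V E v))^2) \<le> real (card (A R)) * (d R)^2"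
    using sum_mono[of "A R" _ "\<lambda>_. (d R)^2"] deg_sq_le[of R] by simp
  have "(\<Sum>v\<in>V. (real (deg V E v))^2) \<le> (\<Sum>i<R. x i * (d i)^2) + real (card (A R)) * (d R)^2"
    unfolding chain using layer_le last_le by (intro add_mono sum_mono) auto
  also have "\<dots> \<le> real (card V) ^ 3 * (real R / (real R + 1))^2"
  proof (rule weighted_squares_le_scaled[OF _ R(1)])
    show "0 < real (card V)"
      using fin beta by (auto simp: beta_seq_def card_gt_0_iff)
    show "\<forall>i<R. 0 \<le> x i \<and> 0 \<le> d i \<and> x i + d i \<le> real (card V) \<and> d R \<le> d i"
    proof (intro allI impI conjI)
      fix i assume "i < R"
      then show "x i + d i \<le> real (card V)" "d R \<le> d i"
        using card_prefix_nbrs_diff_Suc[OF fin, of i us E] beta_seq_deg_antimono[OF fin beta, of i R] R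
        by (simp_all add: x_def d_def A_def flip: of_nat_add)
    qed (simp_all add: x_def d_def)
    show "d R \<le> real (card V)" using deg_le_card[OF fin] by (simp add: d_def)
    show "(\<Sum>i<R. x i) + real (card (A R)) = real (card V)"
      using chain[of "\<lambda>_. 1"] by (simp add: x_def)
    have "(\<Sum>u\<leftarrow>us. deg V E u) = (\<Sum>i<R. deg V E (us ! i)) + deg V E (us ! R)"
      by (simp add: sum_list_sum_nth R(2) atLeast0LessThan)
    then show "(\<Sum>i<R. d i) + d R \<le> real R * real (card V)"
      using sum_deg unfolding d_def R_def
      by (metis of_nat_add of_nat_le_iff of_nat_mult of_nat_sum)
  qed (simp_all add: d_def)
  finally show ?thesis .
qed

lemma ratio_le_of_sum_squares_le:
  fixes n Q :: real and R :: nat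
  assumes n: "0 < n" and Q: "Q \<le> n^3 * (real R / (real R + 1))^2"
  shows "n / (n - sqrt (Q / n)) \<le> real R + 1"
proof -
  define c where "c = real R / (real R + 1)"
  have c: "0 \<le> c" by (simp add: c_def)
  have "Q / n \<le> (n * c)^2"
    using Q n by (simp add: c_def field_simps power2_eq_square power3_eq_cube)
  hence "sqrt (Q / n) \<le> sqrt ((n * c)^2)"
    by (rule real_sqrt_le_mono)
  also have "\<dots> = n * c"
    using n c by simp
  finally have "sqrt (Q / n) \<le> n * c" .
  moreover have "n - n * c = n / (real R + 1)"
    by (simp add: c_def field_simps)
  ultimately have den: "n / (real R + 1) \<le> n - sqrt (Q / n)" by linarith
  moreover have "0 < n / (real R + 1)" using n by simp
  ultimately have "0 < n - sqrt (Q / n)" by linarith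
  with den n have "n / (n - sqrt (Q / n)) \<le> n / (n / (real R + 1))"
    by (intro divide_left_mono mult_pos_pos) auto
  also have "\<dots> = real R + 1" using n by simp
  finally show ?thesis .
qed

theorem corollary4p2:
  fixes V :: "'a set" and E :: "'a \<Rightarrow> 'a \<Rightarrow> bool" and us :: "'a list"
  assumes "simple_graph V E"
    and "beta_seq V E us"
    and "length us \<ge> 2"
    and "(\<Sum>u\<leftarrow>us. deg V E u) \<le> (length us - 1) * card V"
  shows "real (length us) \<ge>
           real (card V) / (real (card V) - sqrt ((\<Sum>v\<in>V. (real (deg V E v))^2) / real (card V)))"
proof -
  have fin: "finite V" using assms(1) by (simp add: simple_graph_def)
  have "0 < card V"
    using fin assms(2) by (auto simp: beta_seq_def card_gt_0_iff)
  then have "real (card V) / (real (card V) - sqrt ((\<Sum>v\<in>V. (real (deg V E v))^2) / real (card V)))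
      \<le> real (length us - 1) + 1"
    using beta_seq_sum_deg_squares_le[OF fin assms(2-4)] by (intro ratio_le_of_sum_squares_le) auto
  moreover have "real (length us - 1) + 1 = real (length us)"
    using assms(3) by (simp add: of_nat_diff)
  ultimately show ?thesis by linarith
qed

end
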